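(* Let $Q=P_1\oplus\dots\oplus P_n$ be an ordinal sum of finite posets and let $r:Q\to R$ be a retraction. If $r[P_i]\not\subseteq P_i$ for some $i\in[1,n]$, then $R$ has the fixed point property.
   Context: The ordinal sum $P_1\oplus\dots\oplus P_n$ of pairwise disjoint posets has carrier $\bigcup_i P_i$, with $x\preceq y$ iff ($x,y\in P_i$ and $x\le_i y$) or ($x\in P_i$, $y\in P_j$, $i<j$). A retraction $r:Q\to R$ is an idempotent order-preserving map $Q\to Q$ with image $R$ (an induced subposet). A poset has the fixed point property if every order-preserving self-map has a fixed point. *)

theory Defs
  imports Main
begin

text \<open>Posets are carriers A together with a relation le with partial_order_on A le.
  Components are indexed by 1..n.\<close>

definition ordinal_sum_carrier :: "nat \<Rightarrow> (nat \<Rightarrow> 'a set) \<Rightarrow> 'a set" where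
  "ordinal_sum_carrier n P = (\<Union>i\<in>{1..n}. P i)"

definition ordinal_sum_rel :: "nat \<Rightarrow> (nat \<Rightarrow> 'a set) \<Rightarrow> (nat \<Rightarrow> 'a rel) \<Rightarrow> 'a rel" where
  "ordinal_sum_rel n P le =
     {(x, y). \<exists>i\<in>{1..n}. x \<in> P i \<and> y \<in> P i \<and> (x, y) \<in> le i}
   \<union> {(x, y). \<exists>i j. 1 \<le> i \<and> i < j \<and> j \<le> n \<and> x \<in> P i \<and> y \<in> P j}"

definition order_preserving :: "'a set \<Rightarrow> 'a rel \<Rightarrow> ('a \<Rightarrow> 'a) \<Rightarrow> bool" where
  "order_preserving A le f \<longleftrightarrow>
     (\<forall>x\<in>A. \<forall>y\<in>A. (x, y) \<in> le \<longrightarrow> (f x, f y) \<in> le)"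

definition induced_rel :: "'a rel \<Rightarrow> 'a set \<Rightarrow> 'a rel" where
  "induced_rel le B = le \<inter> (B \<times> B)"

definition retraction :: "'a set \<Rightarrow> 'a rel \<Rightarrow> ('a \<Rightarrow> 'a) \<Rightarrow> 'a set \<Rightarrow> bool" where
  "retraction Q le r R \<longleftrightarrow>
     (\<forall>x\<in>Q. r x \<in> Q) \<and> order_preserving Q le r \<and> (\<forall>x\<in>Q. r (r x) = r x) \<and> r ` Q = R"

definition fixed_point_property :: "'a set \<Rightarrow> 'a rel \<Rightarrow> bool" where
  "fixed_point_property A le \<longleftrightarrow>
     (\<forall>f. (\<forall>x\<in>A. f x \<in> A) \<and> order_preserving A le f \<longrightarrow> (\<exists>x\<in>A. f x = x))"

end

theory Submission
  imports Defs
begin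

text \<open>Pick x \<in> P i with r x \<notin> P i and put z = r x, say z \<in> P j with j \<noteq> i. Every
  y \<in> Q lies in a block different from that of x or from that of z, so it is comparable with x or
  with z; applying r, which is order-preserving and fixes z, shows that r y is comparable with z.
  Hence R is a finite poset containing an element comparable to all others, and such a poset has
  the fixed point property: for monotone f we have z \<le> f z (or dually f z \<le> z), and the monotone
  chain of iterates of f at z must become stationary.\<close>

definition comparable :: "'a rel \<Rightarrow> 'a \<Rightarrow> 'a \<Rightarrow> bool" where
  "comparable L x y \<longleftrightarrow> (x, y) \<in> L \<or> (y, x) \<in> L"

lemma monotone_iterates_reach_fixed_point:
  assumes "finite R" and "trans L" and "antisym L"
    and maps: "\<forall>x\<in>R. f x \<in> R"
    and mono: "\<forall>x\<in>R. \<forall>y\<in>R. (x, y) \<in> L \<longrightarrow> (f x, f y) \<in> L"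
    and "z \<in> R" and "(z, f z) \<in> L"
  shows "\<exists>x\<in>R. f x = x"
proof -
  define c where "c k = (f ^^ k) z" for k
  have c_in: "c k \<in> R" for k
    by (induction k) (auto simp: c_def \<open>z \<in> R\<close> maps)
  have c_step: "(c k, c (Suc k)) \<in> L" for k
  proof (induction k)
    case 0
    then show ?case using \<open>(z, f z) \<in> L\<close> by (simp add: c_def)
  next
    case (Suc k)
    then have "(f (c k), f (c (Suc k))) \<in> L" using mono c_in by blast
    then show ?case by (simp add: c_def)
  qed
  have c_chain: "(c a, c b) \<in> L" if "a < b" for a b
    using that
  proof (induction rule: less_Suc_induct)
    case (1 i)
    then show ?case by (rule c_step)
  next
    case (2 i j k)
    then show ?case using \<open>trans L\<close> by (blast dest: transD)
  qed
  have "\<not> inj c"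
    using \<open>finite R\<close> c_in finite_imageD[of c UNIV] finite_subset[of "range c" R] by auto
  then obtain a b where "c a = c b" "a < b"
    unfolding inj_def by (metis linorder_neqE_nat)
  have "c (Suc a) = c a"
  proof (cases "Suc a = b")
    case False
    with \<open>a < b\<close> have "(c (Suc a), c a) \<in> L"
      using c_chain[of "Suc a" b] \<open>c a = c b\<close> by simp
    then show ?thesis using c_step[of a] \<open>antisym L\<close> by (blast dest: antisymD)
  qed (use \<open>c a = c b\<close> in simp)
  then show ?thesis using c_in[of a] by (auto simp: c_def)
qed

lemma fixed_point_property_if_comparable_to_all:
  assumes "finite R" and "trans L" and "antisym L"
    and "z \<in> R" and comparable: "\<forall>w\<in>R. comparable L z w"
  shows "fixed_point_property R (induced_rel L R)"
  unfolding fixed_point_property_def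
proof (intro allI impI, elim conjE)
  fix f
  assume maps: "\<forall>x\<in>R. f x \<in> R" and "order_preserving R (induced_rel L R) f"
  then have mono: "\<forall>x\<in>R. \<forall>y\<in>R. (x, y) \<in> L \<longrightarrow> (f x, f y) \<in> L"
    unfolding order_preserving_def induced_rel_def by blast
  have "f z \<in> R" using maps \<open>z \<in> R\<close> by blast
  with comparable consider "(z, f z) \<in> L" | "(z, f z) \<in> L\<inverse>"
    unfolding comparable_def by auto
  then show "\<exists>x\<in>R. f x = x"
  proof cases
    case 1
    from monotone_iterates_reach_fixed_point[OF assms(1-3) maps mono assms(4) this]
    show ?thesis .
  next
    case 2
    have "trans (L\<inverse>)" "antisym (L\<inverse>)"
      using assms(2,3) by simp_all
    moreover have "\<forall>x\<in>R. \<forall>y\<in>R. (x, y) \<in> L\<inverse> \<longrightarrow> (f x, f y) \<in> L\<inverse>"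
      using mono by blast
    ultimately show ?thesis
      using monotone_iterates_reach_fixed_point[OF assms(1) _ _ maps _ assms(4) 2] by blast
  qed
qed

lemma retraction_comparable_to_all:
  assumes ret: "retraction Q L r R" and "x \<in> Q"
    and comparable: "\<forall>y\<in>Q. comparable L x y \<or> comparable L (r x) y"
  shows "\<forall>w\<in>R. comparable L (r x) w"
proof
  fix w
  assume "w \<in> R"
  with ret obtain y where "y \<in> Q" "w = r y"
    unfolding retraction_def by blast
  have "r x \<in> Q" "r (r x) = r x"
    using ret \<open>x \<in> Q\<close> unfolding retraction_def by auto
  have mono: "(u, v) \<in> L \<Longrightarrow> (r u, r v) \<in> L" if "u \<in> Q" "v \<in> Q" for u v
    using ret that unfolding retraction_def order_preserving_def by blast
  from comparable \<open>y \<in> Q\<close> show "comparable L (r x) w"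
    using mono[OF \<open>x \<in> Q\<close> \<open>y \<in> Q\<close>] mono[OF \<open>y \<in> Q\<close> \<open>x \<in> Q\<close>]
      mono[OF \<open>r x \<in> Q\<close> \<open>y \<in> Q\<close>] mono[OF \<open>y \<in> Q\<close> \<open>r x \<in> Q\<close>]
    unfolding comparable_def by (auto simp: \<open>w = r y\<close> \<open>r (r x) = r x\<close>)
qed

lemma ordinal_sum_relE:
  assumes "(x, y) \<in> ordinal_sum_rel n P le"
  obtains (within) i where "i \<in> {1..n}" "x \<in> P i" "y \<in> P i" "(x, y) \<in> le i"
    | (between) i j where "1 \<le> i" "i < j" "j \<le> n" "x \<in> P i" "y \<in> P j"
  using assms unfolding ordinal_sum_rel_def by blast

lemma in_ordinal_sum_rel_between_blocks:
  assumes "1 \<le> i" "i < j" "j \<le> n" "x \<in> P i" "y \<in> P j"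
  shows "(x, y) \<in> ordinal_sum_rel n P le"
  using assms unfolding ordinal_sum_rel_def by blast

lemma ordinal_sum_rel_comparable_distinct_blocks:
  assumes "i \<in> {1..n}" "j \<in> {1..n}" "i \<noteq> j" "x \<in> P i" "y \<in> P j"
  shows "comparable (ordinal_sum_rel n P le) x y"
  unfolding comparable_def
  using assms in_ordinal_sum_rel_between_blocks[of i j n x P y le]
    in_ordinal_sum_rel_between_blocks[of j i n y P x le]
  by (cases "i < j") auto

lemma ordinal_sum_comparable_to_one_of_distinct_blocks:
  assumes "i \<in> {1..n}" "j \<in> {1..n}" "i \<noteq> j" "x \<in> P i" "z \<in> P j"
    and "y \<in> ordinal_sum_carrier n P"
  shows "comparable (ordinal_sum_rel n P le) x y \<or> comparable (ordinal_sum_rel n P le) z y"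
proof -
  obtain k where k: "k \<in> {1..n}" "y \<in> P k"
    using \<open>y \<in> ordinal_sum_carrier n P\<close> unfolding ordinal_sum_carrier_def by blast
  consider "k \<noteq> i" | "k \<noteq> j" using \<open>i \<noteq> j\<close> by blast
  then show ?thesis
  proof cases
    case 1
    with assms k show ?thesis by (simp add: ordinal_sum_rel_comparable_distinct_blocks)
  next
    case 2
    with assms k show ?thesis by (simp add: ordinal_sum_rel_comparable_distinct_blocks)
  qed
qed

lemma finite_ordinal_sum_carrier:
  "\<forall>i\<in>{1..n}. finite (P i) \<Longrightarrow> finite (ordinal_sum_carrier n P)"
  by (simp add: ordinal_sum_carrier_def)

context
  fixes n :: nat and P :: "nat \<Rightarrow> 'a set" and le :: "nat \<Rightarrow> 'a rel"
  assumes po: "\<forall>i\<in>{1..n}. partial_order_on (P i) (le i)"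
    and disj: "\<forall>i\<in>{1..n}. \<forall>j\<in>{1..n}. i \<noteq> j \<longrightarrow> P i \<inter> P j = {}"
begin

private lemma block_unique:
  "i \<in> {1..n} \<Longrightarrow> j \<in> {1..n} \<Longrightarrow> x \<in> P i \<Longrightarrow> x \<in> P j \<Longrightarrow> i = j"
  using disj by blast

lemma trans_ordinal_sum_rel: "trans (ordinal_sum_rel n P le)"
proof (rule transI)
  fix x y z
  assume xy: "(x, y) \<in> ordinal_sum_rel n P le" and yz: "(y, z) \<in> ordinal_sum_rel n P le"
  from xy show "(x, z) \<in> ordinal_sum_rel n P le"
  proof (cases rule: ordinal_sum_relE)
    case xy_within: (within i)
    from yz show ?thesis
    proof (cases rule: ordinal_sum_relE)
      case yz_within: (within i')
      have "i' = i" by (rule block_unique[where x = y]) (use xy_within yz_within in auto)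
      with xy_within yz_within have "(x, z) \<in> le i"
        using po unfolding partial_order_on_def preorder_on_def by (metis transD)
      with xy_within yz_within \<open>i' = i\<close> show ?thesis
        unfolding ordinal_sum_rel_def by blast
    next
      case yz_between: (between i' j')
      have "i' = i" by (rule block_unique[where x = y]) (use xy_within yz_between in auto)
      with xy_within yz_between show ?thesis
        unfolding ordinal_sum_rel_def by blast
    qed
  next
    case xy_between: (between i j)
    from yz show ?thesis
    proof (cases rule: ordinal_sum_relE)
      case yz_within: (within i')
      have "i' = j" by (rule block_unique[where x = y]) (use xy_between yz_within in auto)
      with xy_between yz_within show ?thesis
        unfolding ordinal_sum_rel_def by blast
    next
      case yz_between: (between i' j')
      have "i' = j" by (rule block_unique[where x = y]) (use xy_between yz_between in auto)
      show ?thesis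
        by (rule in_ordinal_sum_rel_between_blocks[where i = i and j = j'])
          (use xy_between yz_between \<open>i' = j\<close> in auto)
    qed
  qed
qed

lemma antisym_ordinal_sum_rel: "antisym (ordinal_sum_rel n P le)"
proof (rule antisymI)
  fix x y
  assume xy: "(x, y) \<in> ordinal_sum_rel n P le" and yx: "(y, x) \<in> ordinal_sum_rel n P le"
  from xy show "x = y"
  proof (cases rule: ordinal_sum_relE)
    case xy_within: (within i)
    from yx show ?thesis
    proof (cases rule: ordinal_sum_relE)
      case yx_within: (within i')
      have "i' = i" by (rule block_unique[where x = y]) (use xy_within yx_within in auto)
      with xy_within yx_within show ?thesis
        using po unfolding partial_order_on_def by (metis antisymD)
    next
      case yx_between: (between i' j')
      have "i' = i" by (rule block_unique[where x = y]) (use xy_within yx_between in auto)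
      moreover have "j' = i" by (rule block_unique[where x = x]) (use xy_within yx_between in auto)
      ultimately show ?thesis using \<open>i' < j'\<close> by simp
    qed
  next
    case xy_between: (between i j)
    from yx show ?thesis
    proof (cases rule: ordinal_sum_relE)
      case yx_within: (within i')
      have "i' = i" by (rule block_unique[where x = x]) (use xy_between yx_within in auto)
      moreover have "i' = j" by (rule block_unique[where x = y]) (use xy_between yx_within in auto)
      ultimately show ?thesis using \<open>i < j\<close> by simp
    next
      case yx_between: (between i' j')
      have "i' = j" by (rule block_unique[where x = y]) (use xy_between yx_between in auto)
      moreover have "j' = i" by (rule block_unique[where x = x]) (use xy_between yx_between in auto)
      ultimately show ?thesis using \<open>i < j\<close> \<open>i' < j'\<close> by simp
    qed
  qed
qed

end

theorem lemma2p1: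
  fixes n :: nat and P :: "nat \<Rightarrow> 'a set" and le :: "nat \<Rightarrow> 'a rel"
    and r :: "'a \<Rightarrow> 'a" and R :: "'a set"
  assumes fin: "\<forall>i\<in>{1..n}. finite (P i)"
    and po: "\<forall>i\<in>{1..n}. partial_order_on (P i) (le i)"
    and disj: "\<forall>i\<in>{1..n}. \<forall>j\<in>{1..n}. i \<noteq> j \<longrightarrow> P i \<inter> P j = {}"
    and ret: "retraction (ordinal_sum_carrier n P) (ordinal_sum_rel n P le) r R"
    and moved: "\<exists>i\<in>{1..n}. \<not> (r ` P i \<subseteq> P i)"
  shows "fixed_point_property R (induced_rel (ordinal_sum_rel n P le) R)"
proof -
  let ?Q = "ordinal_sum_carrier n P"
  have r_maps: "\<forall>x\<in>?Q. r x \<in> ?Q" and r_image: "r ` ?Q = R"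
    using ret unfolding retraction_def by auto
  obtain i x where i: "i \<in> {1..n}" "x \<in> P i" "r x \<notin> P i"
    using moved by blast
  then have "x \<in> ?Q" unfolding ordinal_sum_carrier_def by blast
  then obtain j where j: "j \<in> {1..n}" "r x \<in> P j"
    using r_maps unfolding ordinal_sum_carrier_def by blast
  with i have "i \<noteq> j" by blast
  have "\<forall>w\<in>R. comparable (ordinal_sum_rel n P le) (r x) w"
    by (rule retraction_comparable_to_all[OF ret \<open>x \<in> ?Q\<close>])
      (use ordinal_sum_comparable_to_one_of_distinct_blocks[OF i(1) j(1) \<open>i \<noteq> j\<close> i(2) j(2)]
        in blast)
  moreover have "finite R"
    using finite_ordinal_sum_carrier[OF fin] r_image by blast
  moreover have "r x \<in> R"
    using r_image \<open>x \<in> ?Q\<close> by blast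
  ultimately show ?thesis
    using fixed_point_property_if_comparable_to_all[OF _ trans_ordinal_sum_rel[OF po disj]
      antisym_ordinal_sum_rel[OF po disj]] by blast
qed

end
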